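(* Let $\mathcal{Q}$ be a $d$-GMK instance with time horizon $T$, let $U=\{u_0,\ldots,u_k\}$ be a set of cut points of $T$, let $\mathcal{Q}_U=(q_j)_{j=0}^{k-1}$ be the cut instances of $\mathcal{Q}$ w.r.t. $U$, and for each $j$ let $(S_t,\mathcal{A}_t)_{t=u_j}^{u_{j+1}-1}$ be a feasible solution for $q_j$. Then the cut solution $(S_t,\mathcal{A}_t)_{t=1}^{T}$ is a feasible solution for $\mathcal{Q}$, and $f_{\mathcal{Q}}\left((S_t)_{t=1}^T\right)\ \geq\ \sum_{j=0}^{k-1} f_{q_j}\left((S_t)_{t=u_j}^{u_{j+1}-1}\right).$
   Context: A Multiple Knapsack Constraint (MKC) over an item set $I$ is $K=(w,B,W)$ with weights $w:I\to\mathbb{R}_+$, a set of bins $B$ and capacities $W:B\to\mathbb{R}_+$; an assignment $A:B\to 2^I$ is feasible if $\sum_{i\in A(b)}w(i)\le W(b)$ for every bin $b$, and it is an assignment of $S$ if $S=\cup_{b\in B}A(b)$. A $d$-MKCP instance is $(I,\mathcal{K},p)$ with $\mathcal{K}$ a tuple of $d$ MKCs and $p:I\to\mathbb{R}_{\ge0}$; a feasible solution is a set $S\subseteq I$ together with a tuple $\mathcal{A}$ of feasible assignments of $S$, one per MKC. A $d$-GMK instance is $\mathcal{Q}=((\mathcal{P}_t)_{t=1}^T,g^+,g^-,c^+,c^-)$, where $\mathcal{P}_t=(I,\mathcal{K}_t,p_t)$ is a $d_t$-MKCP instance ($d_t\le d$), $g^+,g^-\in\mathbb{R}_+^{I\times[2,T]}$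 are gains and $c^+,c^-\in\mathbb{R}_+^{I\times[1,T]}$ are change costs. A feasible solution is $(S_t,\mathcal{A}_t)_{t=1}^T$ with $(S_t,\mathcal{A}_t)$ feasible for $\mathcal{P}_t$; with $S_0=S_{T+1}=\emptyset$ its value is $f_{\mathcal{Q}}((S_t)_{t=1}^T)=\sum_{t=1}^T\sum_{i\in S_t}p_t(i)+\sum_{t=2}^T\big(\sum_{i\in S_{t-1}\cap S_t}g^+_{i,t}+\sum_{i\notin S_{t-1}\cup S_t}g^-_{i,t}\big)-\sum_{t=1}^T\big(\sum_{i\in S_t\setminus S_{t-1}}c^+_{i,t}+\sum_{i\in S_t\setminus S_{t+1}}c^-_{i,t}\big)$. A set of cut points of $T$ is $U=\{u_0,\ldots,u_k\}$ of integers with $u_j<u_{j+1}$, $u_0=1$, $u_k=T+1$. The cut instances of $\mathcal{Q}$ w.r.t. $U$ are $q_j=((\mathcal{P}_t)_{t=u_j}^{u_{j+1}-1},g^+,g^-,c^+,c^-)$ for $j=0,\ldots,k-1$, i.e. the sub-instance on the stage range $[u_j,u_{j+1}-1]$ without shifting or truncating the gain and cost vectors; when evaluating a solution of the sub-instance on range $[t_1,t_2]$ by the same formula restricted to that range, one assumes $S_{t_1-1}=S_{t_2+1}=\emptyset$ (so entry costs $c^+$ at $t_1$ and exit costs $c^-$ at $t_2$ are charged, and gains at $t_1$ are not counted). Given feasible solutions $(S_t,\mathcal{A}_t)_{t=u_j}^{u_{j+1}-1}$ for each cut instance $q_j$, the concatenation $(S_t,\mathcal{A}_t)_{t=1}^T$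 is called the cut solution for $\mathcal{Q}$. *)

theory Defs
  imports Complex_Main
begin

text \<open>A multiple knapsack constraint (MKC) K = (w, B, W): weights, bins, capacities.\<close>
type_synonym ('i, 'b) mkc = "('i \<Rightarrow> real) \<times> 'b set \<times> ('b \<Rightarrow> real)"

definition mkc_wf :: "'i set \<Rightarrow> ('i, 'b) mkc \<Rightarrow> bool" where
  "mkc_wf I K = (case K of (w, B, W) \<Rightarrow>
      finite B \<and> (\<forall>i\<in>I. w i \<ge> 0) \<and> (\<forall>b\<in>B. W b \<ge> 0))"

definition feasible_assignment :: "'i set \<Rightarrow> ('i, 'b) mkc \<Rightarrow> ('b \<Rightarrow> 'i set) \<Rightarrow> bool" where
  "feasible_assignment I K A = (case K of (w, B, W) \<Rightarrow>
      (\<forall>b\<in>B. A b \<subseteq> I \<and> sum w (A b) \<le> W b))"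

definition assignment_of :: "('i, 'b) mkc \<Rightarrow> ('b \<Rightarrow> 'i set) \<Rightarrow> 'i set \<Rightarrow> bool" where
  "assignment_of K A S = (case K of (w, B, W) \<Rightarrow> S = (\<Union>b\<in>B. A b))"

definition mkcp_feasible ::
  "'i set \<Rightarrow> ('i, 'b) mkc list \<Rightarrow> 'i set \<Rightarrow> ('b \<Rightarrow> 'i set) list \<Rightarrow> bool" where
  "mkcp_feasible I Ks S As =
     (S \<subseteq> I \<and> length As = length Ks \<and>
      (\<forall>m < length Ks. feasible_assignment I (Ks ! m) (As ! m)
                         \<and> assignment_of (Ks ! m) (As ! m) S))"

definition gmk_wf ::
  "'i set \<Rightarrow> nat \<Rightarrow> nat \<Rightarrow> (nat \<Rightarrow> ('i, 'b) mkc list) \<Rightarrow> (nat \<Rightarrow> 'i \<Rightarrow> real)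
   \<Rightarrow> ('i \<Rightarrow> nat \<Rightarrow> real) \<Rightarrow> ('i \<Rightarrow> nat \<Rightarrow> real)
   \<Rightarrow> ('i \<Rightarrow> nat \<Rightarrow> real) \<Rightarrow> ('i \<Rightarrow> nat \<Rightarrow> real) \<Rightarrow> bool" where
  "gmk_wf I d T Ks p gp gm cp cm =
     (finite I \<and>
      (\<forall>t\<in>{1..T}. length (Ks t) \<le> d \<and> (\<forall>K\<in>set (Ks t). mkc_wf I K)
                   \<and> (\<forall>i\<in>I. p t i \<ge> 0)) \<and>
      (\<forall>i\<in>I. \<forall>t\<in>{2..T}. gp i t \<ge> 0 \<and> gm i t \<ge> 0) \<and>
      (\<forall>i\<in>I. \<forall>t\<in>{1..T}. cp i t \<ge> 0 \<and> cm i t \<ge> 0))"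

text \<open>Value of a solution of the (sub-)instance on stage range [t1, t2], with
  S_{t1-1} = S_{t2+1} = {} (sets outside the range are treated as empty).
  For t1 = 1, t2 = T this is f_Q.\<close>
definition gmk_value ::
  "'i set \<Rightarrow> (nat \<Rightarrow> 'i \<Rightarrow> real)
   \<Rightarrow> ('i \<Rightarrow> nat \<Rightarrow> real) \<Rightarrow> ('i \<Rightarrow> nat \<Rightarrow> real)
   \<Rightarrow> ('i \<Rightarrow> nat \<Rightarrow> real) \<Rightarrow> ('i \<Rightarrow> nat \<Rightarrow> real)
   \<Rightarrow> nat \<Rightarrow> nat \<Rightarrow> (nat \<Rightarrow> 'i set) \<Rightarrow> real" where
  "gmk_value I p gp gm cp cm t1 t2 S =
     (let S' = (\<lambda>t. if t1 \<le> t \<and> t \<le> t2 then S t else {}) in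
       (\<Sum>t\<in>{t1..t2}. \<Sum>i\<in>S' t. p t i)
     + (\<Sum>t\<in>{Suc t1..t2}. (\<Sum>i\<in>S' (t - 1) \<inter> S' t. gp i t)
                           + (\<Sum>i\<in>I - (S' (t - 1) \<union> S' t). gm i t))
     - (\<Sum>t\<in>{t1..t2}. (\<Sum>i\<in>S' t - S' (t - 1). cp i t)
                       + (\<Sum>i\<in>S' t - S' (Suc t). cm i t)))"

definition cut_points :: "nat \<Rightarrow> (nat \<Rightarrow> nat) \<Rightarrow> nat \<Rightarrow> bool" where
  "cut_points T u k = (u 0 = 1 \<and> u k = T + 1 \<and> (\<forall>j<k. u j < u (Suc j)))"

end

theory Submission
  imports Defs
begin

text \<open>Restricted to the stages of a cut instance, the three parts of the objective behave
  differently: profits add up exactly, the cut instances lose the gain of each transition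
  across a cut point, and their change costs can only grow, since every cut point charges
  an exit cost on its left and an entry cost on its right that the whole horizon need not
  pay.  All lost gains and added costs are nonnegative, so the value of the cut solution
  dominates the sum of the values of its pieces.\<close>

definition window :: "nat \<Rightarrow> nat \<Rightarrow> (nat \<Rightarrow> 'i set) \<Rightarrow> nat \<Rightarrow> 'i set" where
  "window t1 t2 S t = (if t1 \<le> t \<and> t \<le> t2 then S t else {})"

definition stage_profit :: "(nat \<Rightarrow> 'i \<Rightarrow> real) \<Rightarrow> (nat \<Rightarrow> 'i set) \<Rightarrow> nat \<Rightarrow> real" where
  "stage_profit p X t = (\<Sum>i\<in>X t. p t i)"

definition transition_gain ::
  "'i set \<Rightarrow> ('i \<Rightarrow> nat \<Rightarrow> real) \<Rightarrow> ('i \<Rightarrow> nat \<Rightarrow> real) \<Rightarrow> (nat \<Rightarrow> 'i set) \<Rightarrow> nat \<Rightarrow> real"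
  where "transition_gain I gp gm X t =
    (\<Sum>i\<in>X (t - 1) \<inter> X t. gp i t) + (\<Sum>i\<in>I - (X (t - 1) \<union> X t). gm i t)"

definition change_cost ::
  "('i \<Rightarrow> nat \<Rightarrow> real) \<Rightarrow> ('i \<Rightarrow> nat \<Rightarrow> real) \<Rightarrow> (nat \<Rightarrow> 'i set) \<Rightarrow> nat \<Rightarrow> real"
  where "change_cost cp cm X t =
    (\<Sum>i\<in>X t - X (t - 1). cp i t) + (\<Sum>i\<in>X t - X (Suc t). cm i t)"

lemma gmk_value_eq:
  "gmk_value I p gp gm cp cm t1 t2 S =
     (\<Sum>t=t1..t2. stage_profit p (window t1 t2 S) t)
   + (\<Sum>t=Suc t1..t2. transition_gain I gp gm (window t1 t2 S) t)
   - (\<Sum>t=t1..t2. change_cost cp cm (window t1 t2 S) t)"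
  unfolding gmk_value_def window_def stage_profit_def transition_gain_def change_cost_def Let_def ..

lemma gmk_value_empty_range: "t2 < t1 \<Longrightarrow> gmk_value I p gp gm cp cm t1 t2 S = 0"
  by (simp add: gmk_value_eq)

lemma window_mono: "a \<le> t1 \<Longrightarrow> t2 \<le> c \<Longrightarrow> window t1 t2 S t \<subseteq> window a c S t"
  by (simp add: window_def)

lemma sum_atLeastAtMost_split:
  fixes f :: "nat \<Rightarrow> 'a::comm_monoid_add"
  assumes "a \<le> Suc b" "b \<le> c"
  shows "(\<Sum>t=a..c. f t) = (\<Sum>t=a..b. f t) + (\<Sum>t=Suc b..c. f t)"
  using sum.ub_add_nat[of a b f "c - b"] assms by simp

lemma transition_gain_nonneg:
  assumes "X t \<subseteq> I" "\<forall>i\<in>I. gp i t \<ge> 0 \<and> gm i t \<ge> 0"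
  shows "transition_gain I gp gm X t \<ge> 0"
  unfolding transition_gain_def using assms by (intro add_nonneg_nonneg sum_nonneg) blast+

lemma change_cost_antimono:
  assumes "finite I" "Y t \<subseteq> I" "\<And>s. X s \<subseteq> Y s" "X t = Y t"
    and "\<forall>i\<in>I. cp i t \<ge> 0 \<and> cm i t \<ge> 0"
  shows "change_cost cp cm Y t \<le> change_cost cp cm X t"
proof -
  have fin: "finite (X t - Z)" for Z
    using assms(1,2,4) by (metis Diff_subset finite_subset)
  have "(\<Sum>i\<in>Y t - Y (t - 1). cp i t) \<le> (\<Sum>i\<in>X t - X (t - 1). cp i t)"
    by (rule sum_mono2) (use fin assms in auto)
  moreover have "(\<Sum>i\<in>Y t - Y (Suc t). cm i t) \<le> (\<Sum>i\<in>X t - X (Suc t). cm i t)"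
    by (rule sum_mono2) (use fin assms in auto)
  ultimately show ?thesis unfolding change_cost_def by linarith
qed

lemma sum_stage_profit_split:
  assumes "a \<le> b" "b < c"
  shows "(\<Sum>t=a..c. stage_profit p (window a c S) t)
    = (\<Sum>t=a..b. stage_profit p (window a b S) t)
      + (\<Sum>t=Suc b..c. stage_profit p (window (Suc b) c S) t)"
proof -
  have "(\<Sum>t=a..c. stage_profit p (window a c S) t)
      = (\<Sum>t=a..b. stage_profit p (window a c S) t)
        + (\<Sum>t=Suc b..c. stage_profit p (window a c S) t)"
    using assms by (intro sum_atLeastAtMost_split) auto
  also have "\<dots> = (\<Sum>t=a..b. stage_profit p (window a b S) t)
      + (\<Sum>t=Suc b..c. stage_profit p (window (Suc b) c S) t)"
    using assms
    by (intro arg_cong2[where f = "(+)"] sum.cong) (auto simp: stage_profit_def window_def)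
  finally show ?thesis .
qed

lemma sum_transition_gain_split:
  assumes "a \<le> b" "b < c" "S (Suc b) \<subseteq> I"
    and "\<forall>i\<in>I. gp i (Suc b) \<ge> 0 \<and> gm i (Suc b) \<ge> 0"
  shows "(\<Sum>t=Suc a..b. transition_gain I gp gm (window a b S) t)
      + (\<Sum>t=Suc (Suc b)..c. transition_gain I gp gm (window (Suc b) c S) t)
    \<le> (\<Sum>t=Suc a..c. transition_gain I gp gm (window a c S) t)"
proof -
  let ?g = "transition_gain I gp gm (window a c S)"
  have "(\<Sum>t=Suc a..c. ?g t) = (\<Sum>t=Suc a..b. ?g t) + (\<Sum>t=Suc b..c. ?g t)"
    using assms by (intro sum_atLeastAtMost_split) auto
  also have "(\<Sum>t=Suc b..c. ?g t) = ?g (Suc b) + (\<Sum>t=Suc (Suc b)..c. ?g t)"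
    using assms by (intro sum.atLeast_Suc_atMost) simp
  also have "(\<Sum>t=Suc a..b. ?g t) = (\<Sum>t=Suc a..b. transition_gain I gp gm (window a b S) t)"
    using assms by (intro sum.cong) (auto simp: transition_gain_def window_def)
  also have "(\<Sum>t=Suc (Suc b)..c. ?g t)
      = (\<Sum>t=Suc (Suc b)..c. transition_gain I gp gm (window (Suc b) c S) t)"
    using assms by (intro sum.cong) (auto simp: transition_gain_def window_def)
  moreover have "?g (Suc b) \<ge> 0"
    using assms by (intro transition_gain_nonneg) (auto simp: window_def)
  ultimately show ?thesis
    by simp
qed

lemma sum_change_cost_split:
  assumes "finite I" "\<forall>t\<in>{a..c}. S t \<subseteq> I" "a \<le> b" "b < c"
    and "\<forall>i\<in>I. \<forall>t\<in>{a..c}. cp i t \<ge> 0 \<and> cm i t \<ge> 0"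
  shows "(\<Sum>t=a..c. change_cost cp cm (window a c S) t)
    \<le> (\<Sum>t=a..b. change_cost cp cm (window a b S) t)
      + (\<Sum>t=Suc b..c. change_cost cp cm (window (Suc b) c S) t)"
proof -
  let ?C = "change_cost cp cm (window a c S)"
  have left: "?C t \<le> change_cost cp cm (window a b S) t" if "t \<in> {a..b}" for t
    using assms that by (intro change_cost_antimono window_mono) (auto simp: window_def)
  have right: "?C t \<le> change_cost cp cm (window (Suc b) c S) t" if "t \<in> {Suc b..c}" for t
    using assms that by (intro change_cost_antimono window_mono) (auto simp: window_def)
  have "(\<Sum>t=a..c. ?C t) = (\<Sum>t=a..b. ?C t) + (\<Sum>t=Suc b..c. ?C t)"
    using assms by (intro sum_atLeastAtMost_split) auto
  also have "\<dots> \<le> (\<Sum>t=a..b. change_cost cp cm (window a b S) t)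
      + (\<Sum>t=Suc b..c. change_cost cp cm (window (Suc b) c S) t)"
    using left right by (intro add_mono sum_mono) auto
  finally show ?thesis .
qed

lemma gmk_value_split:
  assumes "finite I" "\<forall>t\<in>{a..c}. S t \<subseteq> I" "a \<le> b" "b < c"
    and "\<forall>i\<in>I. \<forall>t\<in>{Suc a..c}. gp i t \<ge> 0 \<and> gm i t \<ge> 0"
    and "\<forall>i\<in>I. \<forall>t\<in>{a..c}. cp i t \<ge> 0 \<and> cm i t \<ge> 0"
  shows "gmk_value I p gp gm cp cm a b S + gmk_value I p gp gm cp cm (Suc b) c S
           \<le> gmk_value I p gp gm cp cm a c S"
  using sum_stage_profit_split[of a b c p S] sum_transition_gain_split[of a b c S I gp gm]
    sum_change_cost_split[of I a c S b cp cm] assms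
  by (simp add: gmk_value_eq)

lemma ex_segment_containing:
  fixes u :: "nat \<Rightarrow> nat"
  assumes "u 0 \<le> t" "t < u m"
  shows "\<exists>j<m. u j \<le> t \<and> t < u (Suc j)"
  using assms(2)
proof (induction m)
  case (Suc m)
  then show ?case
    by (cases "t < u m") (auto intro: less_SucI)
qed (use assms(1) in simp)

lemma steps_first_less_last:
  fixes u :: "nat \<Rightarrow> nat"
  assumes "\<forall>j<m. u j < u (Suc j)" "0 < m"
  shows "u 0 < u m"
  using assms
proof (induction m)
  case (Suc m)
  then have "u m < u (Suc m)" and "0 < m \<Longrightarrow> u 0 < u m"
    by simp_all
  then show ?case
    by (cases m) auto
qed simp

lemma gmk_value_superadditive:
  fixes u :: "nat \<Rightarrow> nat"
  assumes "finite I" "0 < u 0" and sets: "\<forall>t\<in>{u 0..c}. S t \<subseteq> I"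
    and gains: "\<forall>i\<in>I. \<forall>t\<in>{Suc (u 0)..c}. gp i t \<ge> 0 \<and> gm i t \<ge> 0"
    and costs: "\<forall>i\<in>I. \<forall>t\<in>{u 0..c}. cp i t \<ge> 0 \<and> cm i t \<ge> 0"
  shows "\<forall>j<m. u j < u (Suc j) \<Longrightarrow> u m \<le> Suc c \<Longrightarrow>
    (\<Sum>j<m. gmk_value I p gp gm cp cm (u j) (u (Suc j) - 1) S)
      \<le> gmk_value I p gp gm cp cm (u 0) (u m - 1) S"
proof (induction m)
  case 0
  then show ?case
    using assms(2) by (simp add: gmk_value_empty_range)
next
  case (Suc m)
  have step: "u m < u (Suc m)"
    using Suc.prems(1) by simp
  have "\<forall>j<m. u j < u (Suc j)"
    using Suc.prems(1) by simp
  moreover have "u m \<le> Suc c"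
    using Suc.prems(2) step by simp
  ultimately have IH: "(\<Sum>j<m. gmk_value I p gp gm cp cm (u j) (u (Suc j) - 1) S)
           \<le> gmk_value I p gp gm cp cm (u 0) (u m - 1) S"
    by (rule Suc.IH)
  show ?case
  proof (cases "m = 0")
    case True
    then show ?thesis
      using assms(2) by (simp add: gmk_value_empty_range)
  next
    case False
    then have "u 0 < u m"
      using Suc.prems(1) steps_first_less_last[of m u] by simp
    then have "gmk_value I p gp gm cp cm (u 0) (u m - 1) S
        + gmk_value I p gp gm cp cm (Suc (u m - 1)) (u (Suc m) - 1) S
        \<le> gmk_value I p gp gm cp cm (u 0) (u (Suc m) - 1) S"
      using assms(1) sets gains costs Suc.prems(2) step by (intro gmk_value_split) auto
    moreover have "Suc (u m - 1) = u m"
      using \<open>u 0 < u m\<close> by simp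
    ultimately show ?thesis
      using IH by simp
  qed
qed

theorem corollary13:
  fixes I :: "'i set" and d T k :: nat
    and Ks :: "nat \<Rightarrow> ('i, 'b) mkc list" and p :: "nat \<Rightarrow> 'i \<Rightarrow> real"
    and gp gm cp cm :: "'i \<Rightarrow> nat \<Rightarrow> real"
    and u :: "nat \<Rightarrow> nat"
    and S :: "nat \<Rightarrow> 'i set" and As :: "nat \<Rightarrow> ('b \<Rightarrow> 'i set) list"
  assumes "gmk_wf I d T Ks p gp gm cp cm"
    and "cut_points T u k"
    and "\<forall>j<k. \<forall>t\<in>{u j..u (Suc j) - 1}. mkcp_feasible I (Ks t) (S t) (As t)"
  shows "(\<forall>t\<in>{1..T}. mkcp_feasible I (Ks t) (S t) (As t))
       \<and> gmk_value I p gp gm cp cm 1 T S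
           \<ge> (\<Sum>j<k. gmk_value I p gp gm cp cm (u j) (u (Suc j) - 1) S)"
proof
  have u0: "u 0 = 1" and uk: "u k = T + 1" and steps: "\<forall>j<k. u j < u (Suc j)"
    using assms(2) unfolding cut_points_def by auto
  show "\<forall>t\<in>{1..T}. mkcp_feasible I (Ks t) (S t) (As t)"
  proof
    fix t
    assume "t \<in> {1..T}"
    then obtain j where "j < k" "u j \<le> t" "t < u (Suc j)"
      using ex_segment_containing[of u t k] u0 uk by auto
    then show "mkcp_feasible I (Ks t) (S t) (As t)"
      using assms(3) by simp
  qed
  then have "\<forall>t\<in>{u 0..T}. S t \<subseteq> I"
    using u0 by (simp add: mkcp_feasible_def)
  moreover have "finite I" "\<forall>i\<in>I. \<forall>t\<in>{Suc (u 0)..T}. gp i t \<ge> 0 \<and> gm i t \<ge> 0"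
      "\<forall>i\<in>I. \<forall>t\<in>{u 0..T}. cp i t \<ge> 0 \<and> cm i t \<ge> 0"
    using assms(1) u0 by (auto simp: gmk_wf_def numeral_2_eq_2)
  ultimately have "(\<Sum>j<k. gmk_value I p gp gm cp cm (u j) (u (Suc j) - 1) S)
      \<le> gmk_value I p gp gm cp cm (u 0) (u k - 1) S"
    using steps u0 uk by (intro gmk_value_superadditive) auto
  then show "(\<Sum>j<k. gmk_value I p gp gm cp cm (u j) (u (Suc j) - 1) S)
      \<le> gmk_value I p gp gm cp cm 1 T S"
    using u0 uk by simp
qed

end
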